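(* Fix $i<j$ and $\varepsilon>0$. Let $\hat T_{ij}\in\mathcal P_m$ and let $T_{ij}$ be generated by: $[T_{ij}]_{p,q}=1-Z_{pq}^2$ if $[\hat T_{ij}]_{p,q}=1$ and $[T_{ij}]_{p,q}=Z_{pq}^2$ if $[\hat T_{ij}]_{p,q}=0$, with $Z_{pq}\sim\mathcal N(0,\eta_{ij})$ independent. If $\eta_{ij}\le\min\!\big(\frac1{10},\frac{1}{4(1+\varepsilon)\ln m+2}\big)$ and $m\ge 2^{1/\varepsilon}$, then with probability at least $1-m^{-2\varepsilon}$, $\hat T_{ij}$ is the unique maximizer of $\operatorname{tr}(P^\top T_{ij})$ over $P\in\mathcal P_m$.
   Context: $\mathcal P_m$ denotes the set of $m\times m$ permutation matrices; $\mathcal N(0,\eta)$ is the Gaussian with mean $0$ and variance $\eta$. *)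

theory Defs
  imports "HOL-Probability.Probability"
begin

text \<open>m x m real matrices are represented as functions nat => nat => real,
  entries with indices p, q < m (indices 0..m-1).\<close>

definition perm_matrices :: "nat \<Rightarrow> (nat \<Rightarrow> nat \<Rightarrow> real) set" where
  "perm_matrices m = {P. (\<forall>p q. P p q \<in> {0, 1})
      \<and> (\<forall>p<m. \<exists>!q. q < m \<and> P p q = 1)
      \<and> (\<forall>q<m. \<exists>!p. p < m \<and> P p q = 1)
      \<and> (\<forall>p q. m \<le> p \<or> m \<le> q \<longrightarrow> P p q = 0)}"

definition trace_PtT :: "nat \<Rightarrow> (nat \<Rightarrow> nat \<Rightarrow> real) \<Rightarrow> (nat \<Rightarrow> nat \<Rightarrow> real) \<Rightarrow> real" where
  "trace_PtT m P T = (\<Sum>p<m. \<Sum>q<m. P p q * T p q)"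

definition noisy_matrix :: "(nat \<Rightarrow> nat \<Rightarrow> real) \<Rightarrow> (nat \<times> nat \<Rightarrow> real) \<Rightarrow> nat \<Rightarrow> nat \<Rightarrow> real" where
  "noisy_matrix That Z p q = (if That p q = 1 then 1 - (Z (p, q))^2 else (Z (p, q))^2)"

text \<open>Independent N(0, eta) entries Z_pq, p, q < m (normal_density takes the standard deviation).\<close>
definition gauss_array :: "nat \<Rightarrow> real \<Rightarrow> (nat \<times> nat \<Rightarrow> real) measure" where
  "gauss_array m \<eta> = PiM ({..<m} \<times> {..<m}) (\<lambda>_. density lborel (normal_density 0 (sqrt \<eta>)))"

definition unique_maximizer :: "nat \<Rightarrow> (nat \<Rightarrow> nat \<Rightarrow> real) \<Rightarrow> (nat \<Rightarrow> nat \<Rightarrow> real) \<Rightarrow> bool" where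
  "unique_maximizer m T P0 \<longleftrightarrow> P0 \<in> perm_matrices m \<and>
     (\<forall>P\<in>perm_matrices m. P \<noteq> P0 \<longrightarrow> trace_PtT m P T < trace_PtT m P0 T)"

end

theory Submission
  imports Defs "HOL-Real_Asymp.Real_Asymp"
begin

text \<open>Let \<open>\<sigma>\<close> be the permutation of \<open>That\<close>. In row \<open>p\<close> the entry of \<open>T\<close> at \<open>\<sigma> p\<close> is
  \<open>1 - Z\<^sub>p\<^sub>,\<^sub>\<sigma>\<^sub>p\<^sup>2\<close> and every other entry is \<open>Z\<^sub>p\<^sub>q\<^sup>2\<close>, so as soon as
  \<open>Z\<^sub>p\<^sub>,\<^sub>\<sigma>\<^sub>p\<^sup>2 + Z\<^sub>p\<^sub>q\<^sup>2 < 1\<close> for all \<open>q \<noteq> \<sigma> p\<close>, the entries of \<open>That\<close> dominate their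
  rows strictly and every other permutation loses in some row. For two independent \<open>\<N>(0,\<eta>)\<close>
  variables, \<open>X\<^sup>2 + Y\<^sup>2 \<ge> 1\<close> has probability exactly \<open>exp (-1/(2\<eta>))\<close>; a union bound over
  fewer than \<open>m\<^sup>2\<close> pairs and the hypothesis on \<open>\<eta>\<close> give failure probability at most
  \<open>m\<^sup>2 exp (-1/(2\<eta>)) \<le> m powr (-2\<epsilon>)\<close>.\<close>

lemma nn_integral_lborel_even:
  fixes f :: "real \<Rightarrow> ennreal"
  assumes [measurable]: "f \<in> borel_measurable borel" and even: "\<And>x. f (- x) = f x"
  shows "(\<integral>\<^sup>+x. f x \<partial>lborel) = 2 * (\<integral>\<^sup>+x. f x * indicator {0<..} x \<partial>lborel)"
proof -
  have "(\<integral>\<^sup>+x. f x \<partial>lborel) = (\<integral>\<^sup>+x. f x * indicator {0<..} x + f x * indicator {..<0} x \<partial>lborel)"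
    by (intro nn_integral_cong_AE eventually_mono[OF AE_lborel_singleton[of 0]])
       (auto split: split_indicator)
  also have "\<dots> = (\<integral>\<^sup>+x. f x * indicator {0<..} x \<partial>lborel) + (\<integral>\<^sup>+x. f x * indicator {..<0} x \<partial>lborel)"
    by (rule nn_integral_add) auto
  also have "(\<integral>\<^sup>+x. f x * indicator {..<0} x \<partial>lborel)
      = \<bar>-1::real\<bar> * (\<integral>\<^sup>+x. f (0 + (-1) * x) * indicator {..<0} (0 + (-1) * x) \<partial>lborel)"
    by (rule nn_integral_real_affine) auto
  also have "\<dots> = (\<integral>\<^sup>+x. f x * indicator {0<..} x \<partial>lborel)"
    by (auto simp: even intro!: nn_integral_cong split: split_indicator)
  finally show ?thesis by (simp add: mult_2)
qed

lemma nn_integral_inverse_1_plus_square_pos: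
  "(\<integral>\<^sup>+s. ennreal (1 / (1 + s\<^sup>2)) * indicator {0<..} s \<partial>lborel) = ennreal (pi / 2)"
proof -
  have "(\<integral>\<^sup>+s. ennreal (1 / (1 + s\<^sup>2)) * indicator {0<..} s \<partial>lborel)
      = (\<integral>\<^sup>+s. ennreal (1 / (1 + s\<^sup>2)) * indicator {0..} s \<partial>lborel)"
    by (intro nn_integral_cong_AE eventually_mono[OF AE_lborel_singleton[of 0]])
       (auto split: split_indicator)
  also have "\<dots> = ennreal (pi / 2 - arctan 0)"
  proof (rule nn_integral_FTC_atLeast)
    fix x :: real
    show "0 \<le> 1 / (1 + x\<^sup>2)" by (simp add: add_pos_nonneg)
    show "(arctan has_real_derivative 1 / (1 + x\<^sup>2)) (at x)"
      using DERIV_arctan[of x] by (simp add: power2_eq_square divide_inverse)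
  qed (auto intro: tendsto_arctan_at_top)
  finally show ?thesis by simp
qed

text \<open>With \<open>k = 1/(2\<sigma>\<^sup>2)\<close>, \<open>k/\<pi> exp (-k (x\<^sup>2+y\<^sup>2))\<close> is the joint density of two independent
  \<open>\<N>(0,\<sigma>\<^sup>2)\<close> variables; here it is cut off to the complement of the disc \<open>x\<^sup>2+y\<^sup>2 < r\<close>.\<close>

definition gauss2_tail_density :: "real \<Rightarrow> real \<Rightarrow> real \<Rightarrow> real" where
  "gauss2_tail_density k r u = k / pi * exp (- k * u) * indicator {r..} u"

lemma gauss2_tail_density_measurable [measurable]:
  "gauss2_tail_density k r \<in> borel_measurable borel"
  unfolding gauss2_tail_density_def by measurable

lemma gauss2_tail_density_nonneg: "k > 0 \<Longrightarrow> gauss2_tail_density k r u \<ge> 0"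
  by (simp add: gauss2_tail_density_def)

lemma nn_integral_gauss2_tail_density_ray:
  assumes k: "k > 0" and r: "r > 0"
  shows "(\<integral>\<^sup>+x. ennreal (x * gauss2_tail_density k r (x\<^sup>2 * (1 + s\<^sup>2))) * indicator {0<..} x \<partial>lborel)
       = ennreal (exp (- k * r) / (2 * pi * (1 + s\<^sup>2)))"
proof -
  define K where "K = k * (1 + s\<^sup>2)"
  define a where "a = sqrt (r / (1 + s\<^sup>2))"
  have s: "1 + s\<^sup>2 > 0" by (simp add: add_pos_nonneg)
  have K: "K > 0" using k s by (simp add: K_def)
  have a: "a > 0" using s r by (simp add: a_def)
  have a_sq: "a\<^sup>2 * (1 + s\<^sup>2) = r" using s r by (simp add: a_def)
  have threshold: "r \<le> x\<^sup>2 * (1 + s\<^sup>2) \<longleftrightarrow> a \<le> x" if "x > 0" for x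
  proof -
    have "r \<le> x\<^sup>2 * (1 + s\<^sup>2) \<longleftrightarrow> a\<^sup>2 \<le> x\<^sup>2" using a_sq s by (metis mult_le_cancel_right_pos)
    also have "\<dots> \<longleftrightarrow> a \<le> x" using that a by (simp add: power_mono_iff)
    finally show ?thesis .
  qed
  have "(\<integral>\<^sup>+x. ennreal (x * gauss2_tail_density k r (x\<^sup>2 * (1 + s\<^sup>2))) * indicator {0<..} x \<partial>lborel)
      = (\<integral>\<^sup>+x. ennreal (k / pi * x * exp (- K * x\<^sup>2)) * indicator {a..} x \<partial>lborel)"
  proof (intro nn_integral_cong)
    fix x :: real
    show "ennreal (x * gauss2_tail_density k r (x\<^sup>2 * (1 + s\<^sup>2))) * indicator {0<..} x
        = ennreal (k / pi * x * exp (- K * x\<^sup>2)) * indicator {a..} x"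
      using threshold[of x] a
      by (cases "x > 0") (auto simp: gauss2_tail_density_def K_def indicator_def algebra_simps)
  qed
  also have "\<dots> = ennreal (0 - (- (k / pi) / (2 * K) * exp (- K * a\<^sup>2)))"
  proof (rule nn_integral_FTC_atLeast)
    fix x :: real assume "a \<le> x"
    then show "0 \<le> k / pi * x * exp (- K * x\<^sup>2)" using k a by simp
    show "((\<lambda>x. - (k / pi) / (2 * K) * exp (- K * x\<^sup>2)) has_real_derivative k / pi * x * exp (- K * x\<^sup>2)) (at x)"
      using K by (auto intro!: derivative_eq_intros simp: field_simps)
  next
    show "((\<lambda>x. - (k / pi) / (2 * K) * exp (- K * x\<^sup>2)) \<longlongrightarrow> 0) at_top"
      using K by real_asymp
  qed auto
  also have "0 - (- (k / pi) / (2 * K) * exp (- K * a\<^sup>2)) = exp (- k * r) / (2 * pi * (1 + s\<^sup>2))"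
  proof -
    have "K * a\<^sup>2 = k * r" using a_sq by (simp add: K_def ac_simps)
    then have "exp (- K * a\<^sup>2) = exp (- k * r)" by simp
    moreover have "k / pi / (2 * K) = 1 / (2 * pi * (1 + s\<^sup>2))" using k s by (simp add: K_def)
    ultimately show ?thesis by (simp add: field_simps)
  qed
  finally show ?thesis .
qed

lemma nn_integral_gauss2_tail_density_rescale:
  assumes k: "k > 0" and x: "x > 0"
  shows "(\<integral>\<^sup>+y. ennreal (gauss2_tail_density k r (x\<^sup>2 + y\<^sup>2)) * indicator {0<..} y \<partial>lborel)
       = (\<integral>\<^sup>+s. ennreal (x * gauss2_tail_density k r (x\<^sup>2 * (1 + s\<^sup>2))) * indicator {0<..} s \<partial>lborel)"
proof -
  have "(\<integral>\<^sup>+y. ennreal (gauss2_tail_density k r (x\<^sup>2 + y\<^sup>2)) * indicator {0<..} y \<partial>lborel)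
      = ennreal \<bar>x\<bar> * (\<integral>\<^sup>+s. ennreal (gauss2_tail_density k r (x\<^sup>2 + (0 + x * s)\<^sup>2))
          * indicator {0<..} (0 + x * s) \<partial>lborel)"
    using x by (intro nn_integral_real_affine) auto
  also have "\<dots> = (\<integral>\<^sup>+s. ennreal x * (ennreal (gauss2_tail_density k r (x\<^sup>2 + (0 + x * s)\<^sup>2))
          * indicator {0<..} (0 + x * s)) \<partial>lborel)"
    using x by (subst nn_integral_cmult) auto
  also have "\<dots> = (\<integral>\<^sup>+s. ennreal (x * gauss2_tail_density k r (x\<^sup>2 * (1 + s\<^sup>2))) * indicator {0<..} s \<partial>lborel)"
  proof (intro nn_integral_cong)
    fix s :: real
    have "x\<^sup>2 + (0 + x * s)\<^sup>2 = x\<^sup>2 * (1 + s\<^sup>2)" by (simp add: algebra_simps power2_eq_square)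
    moreover have "indicator {0<..} (0 + x * s) = (indicator {0<..} s :: ennreal)"
      using x by (simp add: indicator_def zero_less_mult_iff)
    ultimately show "ennreal x * (ennreal (gauss2_tail_density k r (x\<^sup>2 + (0 + x * s)\<^sup>2)) * indicator {0<..} (0 + x * s))
        = ennreal (x * gauss2_tail_density k r (x\<^sup>2 * (1 + s\<^sup>2))) * indicator {0<..} s"
      using x gauss2_tail_density_nonneg[OF k] by (simp add: ennreal_mult mult.assoc)
  qed
  finally show ?thesis .
qed

text \<open>The substitution \<open>y = x s\<close> on each half-line replaces polar coordinates.\<close>

lemma nn_integral_gauss2_tail_density:
  assumes k: "k > 0" and r: "r > 0"
  shows "(\<integral>\<^sup>+x. \<integral>\<^sup>+y. ennreal (gauss2_tail_density k r (x\<^sup>2 + y\<^sup>2)) \<partial>lborel \<partial>lborel) = ennreal (exp (- k * r))"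
proof -
  define H where "H x = (\<integral>\<^sup>+y. ennreal (gauss2_tail_density k r (x\<^sup>2 + y\<^sup>2)) * indicator {0<..} y \<partial>lborel)" for x
  have [measurable]: "H \<in> borel_measurable borel"
    unfolding H_def by measurable
  have "(\<integral>\<^sup>+x. \<integral>\<^sup>+y. ennreal (gauss2_tail_density k r (x\<^sup>2 + y\<^sup>2)) \<partial>lborel \<partial>lborel) = (\<integral>\<^sup>+x. 2 * H x \<partial>lborel)"
    unfolding H_def by (intro nn_integral_cong nn_integral_lborel_even) auto
  also have "\<dots> = 2 * (\<integral>\<^sup>+x. H x \<partial>lborel)"
    by (rule nn_integral_cmult) auto
  also have "(\<integral>\<^sup>+x. H x \<partial>lborel) = 2 * (\<integral>\<^sup>+x. H x * indicator {0<..} x \<partial>lborel)"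
    by (rule nn_integral_lborel_even) (auto simp: H_def)
  also have "(\<integral>\<^sup>+x. H x * indicator {0<..} x \<partial>lborel)
     = (\<integral>\<^sup>+x. \<integral>\<^sup>+s. ennreal (x * gauss2_tail_density k r (x\<^sup>2 * (1 + s\<^sup>2)))
          * indicator {0<..} s * indicator {0<..} x \<partial>lborel \<partial>lborel)"
    by (intro nn_integral_cong)
       (auto simp: H_def nn_integral_gauss2_tail_density_rescale[OF k] split: split_indicator)
  also have "\<dots> = (\<integral>\<^sup>+s. \<integral>\<^sup>+x. ennreal (x * gauss2_tail_density k r (x\<^sup>2 * (1 + s\<^sup>2)))
          * indicator {0<..} s * indicator {0<..} x \<partial>lborel \<partial>lborel)"
    by (rule lborel_pair.Fubini') measurable
  also have "\<dots> = (\<integral>\<^sup>+s. ennreal (exp (- k * r) / (2 * pi)) * (ennreal (1 / (1 + s\<^sup>2)) * indicator {0<..} s) \<partial>lborel)"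
  proof (intro nn_integral_cong)
    fix s :: real
    have "(\<integral>\<^sup>+x. ennreal (x * gauss2_tail_density k r (x\<^sup>2 * (1 + s\<^sup>2))) * indicator {0<..} s * indicator {0<..} x \<partial>lborel)
        = indicator {0<..} s * (\<integral>\<^sup>+x. ennreal (x * gauss2_tail_density k r (x\<^sup>2 * (1 + s\<^sup>2))) * indicator {0<..} x \<partial>lborel)"
      by (subst nn_integral_cmult[symmetric]) (auto intro!: nn_integral_cong simp: ac_simps)
    also have "\<dots> = ennreal (exp (- k * r) / (2 * pi)) * (ennreal (1 / (1 + s\<^sup>2)) * indicator {0<..} s)"
    proof -
      have "ennreal (exp (- k * r) / (2 * pi * (1 + s\<^sup>2)))
          = ennreal (exp (- k * r) / (2 * pi)) * ennreal (1 / (1 + s\<^sup>2))"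
        by (simp add: ennreal_mult[symmetric] add_pos_nonneg)
      then show ?thesis
        unfolding nn_integral_gauss2_tail_density_ray[OF k r] by (simp add: ac_simps)
    qed
    finally show "(\<integral>\<^sup>+x. ennreal (x * gauss2_tail_density k r (x\<^sup>2 * (1 + s\<^sup>2))) * indicator {0<..} s * indicator {0<..} x \<partial>lborel)
        = ennreal (exp (- k * r) / (2 * pi)) * (ennreal (1 / (1 + s\<^sup>2)) * indicator {0<..} s)" .
  qed
  also have "\<dots> = ennreal (exp (- k * r) / (2 * pi)) * ennreal (pi / 2)"
    by (simp add: nn_integral_cmult nn_integral_inverse_1_plus_square_pos)
  finally show ?thesis
    by (simp add: ennreal_mult[symmetric] mult.assoc[symmetric] ennreal_numeral[symmetric] del: ennreal_numeral)
qed

lemma emeasure_normal_pair_outside_disc: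
  fixes \<sigma> r :: real
  defines "N \<equiv> density lborel (normal_density 0 \<sigma>)"
  assumes \<sigma>: "\<sigma> > 0" and r: "r > 0"
  shows "emeasure (N \<Otimes>\<^sub>M N) {z \<in> space (N \<Otimes>\<^sub>M N). r \<le> (fst z)\<^sup>2 + (snd z)\<^sup>2}
       = ennreal (exp (- r / (2 * \<sigma>\<^sup>2)))"
proof -
  define k where "k = 1 / (2 * \<sigma>\<^sup>2)"
  have k: "k > 0" using \<sigma> by (simp add: k_def)
  let ?A = "{z \<in> space (N \<Otimes>\<^sub>M N). r \<le> (fst z)\<^sup>2 + (snd z)\<^sup>2}"
  let ?\<phi> = "normal_density 0 \<sigma>"
  have A [measurable]: "?A \<in> sets (N \<Otimes>\<^sub>M N)" unfolding N_def by measurable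
  interpret N: sigma_finite_measure N
    unfolding N_def using prob_space_normal_density[OF \<sigma>] by (simp add: prob_space_imp_sigma_finite)
  have density_product: "?\<phi> x * ?\<phi> y * indicator {r..} (x\<^sup>2 + y\<^sup>2) = gauss2_tail_density k r (x\<^sup>2 + y\<^sup>2)" for x y
  proof -
    have "?\<phi> x * ?\<phi> y = 1 / sqrt (2 * pi * \<sigma>\<^sup>2) ^ 2 * (exp (- x\<^sup>2 / (2 * \<sigma>\<^sup>2)) * exp (- y\<^sup>2 / (2 * \<sigma>\<^sup>2)))"
      by (simp add: normal_density_def power2_eq_square)
    also have "\<dots> = k / pi * exp (- k * (x\<^sup>2 + y\<^sup>2))"
      unfolding mult_exp_exp using \<sigma> by (simp add: k_def field_simps)
    finally show ?thesis by (simp add: gauss2_tail_density_def)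
  qed
  have "emeasure (N \<Otimes>\<^sub>M N) ?A = (\<integral>\<^sup>+x. emeasure N (Pair x -` ?A) \<partial>N)"
    by (rule N.emeasure_pair_measure_alt[OF A])
  also have "\<dots> = (\<integral>\<^sup>+x. ?\<phi> x * emeasure N (Pair x -` ?A) \<partial>lborel)"
    using N.measurable_emeasure_Pair[OF A] unfolding N_def by (intro nn_integral_density) auto
  also have "\<dots> = (\<integral>\<^sup>+x. \<integral>\<^sup>+y. ennreal (gauss2_tail_density k r (x\<^sup>2 + y\<^sup>2)) \<partial>lborel \<partial>lborel)"
  proof (intro nn_integral_cong)
    fix x :: real
    have "emeasure N (Pair x -` ?A) = (\<integral>\<^sup>+y. ennreal (?\<phi> y) * indicator {r..} (x\<^sup>2 + y\<^sup>2) \<partial>lborel)"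
      unfolding N_def by (subst emeasure_density)
        (auto intro!: sets_Pair1 A[unfolded N_def] nn_integral_cong simp: space_pair_measure split: split_indicator)
    then have "ennreal (?\<phi> x) * emeasure N (Pair x -` ?A)
        = (\<integral>\<^sup>+y. ennreal (?\<phi> x) * (ennreal (?\<phi> y) * indicator {r..} (x\<^sup>2 + y\<^sup>2)) \<partial>lborel)"
      by (simp add: nn_integral_cmult)
    also have "\<dots> = (\<integral>\<^sup>+y. ennreal (gauss2_tail_density k r (x\<^sup>2 + y\<^sup>2)) \<partial>lborel)"
      by (intro nn_integral_cong)
        (simp add: density_product[symmetric] ennreal_mult'[symmetric] split: split_indicator)
    finally show "ennreal (?\<phi> x) * emeasure N (Pair x -` ?A) = \<dots>" .
  qed
  also have "\<dots> = ennreal (exp (- k * r))" by (rule nn_integral_gauss2_tail_density[OF k r])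
  finally show ?thesis by (simp add: k_def)
qed

lemma (in prob_space) distr_PiM_component_pair:
  assumes "a \<in> I" "b \<in> I" "a \<noteq> b"
  shows "distr (PiM I (\<lambda>_. M)) (M \<Otimes>\<^sub>M M) (\<lambda>\<omega>. (\<omega> a, \<omega> b)) = M \<Otimes>\<^sub>M M"
proof -
  define f where "f = (\<lambda>x::bool. if x then a else b)"
  let ?P = "PiM (UNIV :: bool set) (\<lambda>_. M)"
  let ?reindex = "\<lambda>\<omega>. \<lambda>n\<in>(UNIV :: bool set). \<omega> (f n)"
  let ?pair = "\<lambda>x :: bool \<Rightarrow> 'a. (x True, x False)"
  have f: "inj_on f UNIV" "f \<in> UNIV \<rightarrow> I" using assms by (auto simp: f_def inj_on_def)
  have reindex: "distr (PiM I (\<lambda>_. M)) ?P ?reindex = ?P"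
    using distr_PiM_reindex[of I "\<lambda>_. M" f UNIV] f prob_space_axioms by simp
  have "case_bool M M = (\<lambda>_. M)" by (rule ext) (simp split: bool.split)
  then have pair: "M \<Otimes>\<^sub>M M = distr ?P (M \<Otimes>\<^sub>M M) ?pair"
    using pair_measure_eq_distr_PiM[OF sigma_finite_measure_axioms sigma_finite_measure_axioms] by simp
  have "distr (PiM I (\<lambda>_. M)) (M \<Otimes>\<^sub>M M) (\<lambda>\<omega>. (\<omega> a, \<omega> b))
      = distr (PiM I (\<lambda>_. M)) (M \<Otimes>\<^sub>M M) (?pair \<circ> ?reindex)"
    by (simp add: f_def comp_def)
  also have "\<dots> = distr (distr (PiM I (\<lambda>_. M)) ?P ?reindex) (M \<Otimes>\<^sub>M M) ?pair"
    using f by (intro distr_distr[symmetric] measurable_restrict measurable_component_singleton) auto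
  finally show ?thesis using reindex pair by simp
qed

lemma (in prob_space) prob_PiM_component_pair:
  assumes "a \<in> I" "b \<in> I" "a \<noteq> b" and A: "A \<in> sets (M \<Otimes>\<^sub>M M)"
  shows "measure (PiM I (\<lambda>_. M)) {\<omega> \<in> space (PiM I (\<lambda>_. M)). (\<omega> a, \<omega> b) \<in> A} = measure (M \<Otimes>\<^sub>M M) A"
proof -
  have "(\<lambda>\<omega>. (\<omega> a, \<omega> b)) \<in> measurable (PiM I (\<lambda>_. M)) (M \<Otimes>\<^sub>M M)"
    using assms by (intro measurable_Pair measurable_component_singleton) auto
  from measure_distr[OF this A] show ?thesis
    unfolding distr_PiM_component_pair[OF assms(1-3)] by (simp add: Int_def conj_commute)
qed

definition perm_matrix_of :: "nat \<Rightarrow> (nat \<Rightarrow> nat) \<Rightarrow> nat \<Rightarrow> nat \<Rightarrow> real" where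
  "perm_matrix_of m \<sigma> p q = (if p < m \<and> q = \<sigma> p then 1 else 0)"

lemma perm_matrices_obtain_map:
  assumes P: "P \<in> perm_matrices m"
  obtains \<sigma> where "\<sigma> \<in> {..<m} \<rightarrow> {..<m}" and "P = perm_matrix_of m \<sigma>"
proof
  define \<sigma> where "\<sigma> p = (THE q. q < m \<and> P p q = 1)" for p
  have \<sigma>: "\<sigma> p < m \<and> P p (\<sigma> p) = 1" if "p < m" for p
  proof -
    have "\<exists>!q. q < m \<and> P p q = 1" using P that by (simp add: perm_matrices_def)
    then show ?thesis unfolding \<sigma>_def by (rule theI')
  qed
  show "\<sigma> \<in> {..<m} \<rightarrow> {..<m}" using \<sigma> by auto
  show "P = perm_matrix_of m \<sigma>"
  proof (intro ext)
    fix p q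
    show "P p q = perm_matrix_of m \<sigma> p q"
    proof (cases "p < m \<and> q < m")
      case True
      then have "P p q \<in> {0, 1}" "\<exists>!q. q < m \<and> P p q = 1"
        using P by (simp_all add: perm_matrices_def)
      then show ?thesis
        using \<sigma>[of p] True unfolding perm_matrix_of_def by (metis insertE singletonD)
    next
      case False
      then have "m \<le> p \<or> m \<le> q" by auto
      then have "P p q = 0" using P unfolding perm_matrices_def by blast
      then show ?thesis using False \<sigma>[of p] by (auto simp: perm_matrix_of_def)
    qed
  qed
qed

lemma finite_perm_matrices: "finite (perm_matrices m)"
proof (rule finite_subset)
  show "perm_matrices m \<subseteq> perm_matrix_of m ` ({..<m} \<rightarrow>\<^sub>E {..<m})"
  proof
    fix P assume "P \<in> perm_matrices m"
    then obtain \<sigma> where \<sigma>: "\<sigma> \<in> {..<m} \<rightarrow> {..<m}" and "P = perm_matrix_of m \<sigma>"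
      by (rule perm_matrices_obtain_map)
    then have "P = perm_matrix_of m (restrict \<sigma> {..<m})"
      by (intro ext) (simp add: perm_matrix_of_def)
    moreover have "restrict \<sigma> {..<m} \<in> {..<m} \<rightarrow>\<^sub>E {..<m}" using \<sigma> by simp
    ultimately show "P \<in> perm_matrix_of m ` ({..<m} \<rightarrow>\<^sub>E {..<m})" by (rule image_eqI)
  qed
  show "finite (perm_matrix_of m ` ({..<m} \<rightarrow>\<^sub>E {..<m}))"
    by (intro finite_imageI finite_PiE) simp_all
qed

lemma trace_PtT_perm_matrix_of:
  assumes "\<sigma> \<in> {..<m} \<rightarrow> {..<m}"
  shows "trace_PtT m (perm_matrix_of m \<sigma>) T = (\<Sum>p<m. T p (\<sigma> p))"
proof -
  have "(\<Sum>q<m. perm_matrix_of m \<sigma> p q * T p q) = T p (\<sigma> p)" if "p < m" for p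
  proof -
    have "(\<Sum>q<m. perm_matrix_of m \<sigma> p q * T p q) = (\<Sum>q<m. if q = \<sigma> p then T p q else 0)"
      using that by (intro sum.cong) (simp_all add: perm_matrix_of_def)
    then show ?thesis using assms that by auto
  qed
  then show ?thesis unfolding trace_PtT_def by simp
qed

lemma unique_maximizer_if_row_dominant:
  assumes P0: "P0 \<in> perm_matrices m"
    and dominant: "\<And>p q q'. p < m \<Longrightarrow> q' < m \<Longrightarrow> P0 p q = 1 \<Longrightarrow> P0 p q' = 0 \<Longrightarrow> T p q' < T p q"
  shows "unique_maximizer m T P0"
  unfolding unique_maximizer_def
proof (intro conjI ballI impI P0)
  fix P assume P: "P \<in> perm_matrices m" and "P \<noteq> P0"
  obtain \<sigma>0 where \<sigma>0: "\<sigma>0 \<in> {..<m} \<rightarrow> {..<m}" and P0_eq: "P0 = perm_matrix_of m \<sigma>0"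
    using P0 by (rule perm_matrices_obtain_map)
  obtain \<sigma> where \<sigma>: "\<sigma> \<in> {..<m} \<rightarrow> {..<m}" and P_eq: "P = perm_matrix_of m \<sigma>"
    using P by (rule perm_matrices_obtain_map)
  have row_less: "T p (\<sigma> p) < T p (\<sigma>0 p)" if "p < m" "\<sigma> p \<noteq> \<sigma>0 p" for p
    using dominant[of p "\<sigma> p" "\<sigma>0 p"] that \<sigma> by (auto simp: P0_eq perm_matrix_of_def)
  have row_le: "T p (\<sigma> p) \<le> T p (\<sigma>0 p)" if "p < m" for p
    using row_less[of p] that by (metis less_imp_le order_refl)
  have "\<exists>p<m. \<sigma> p \<noteq> \<sigma>0 p"
  proof (rule ccontr)
    assume "\<not> (\<exists>p<m. \<sigma> p \<noteq> \<sigma>0 p)"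
    then have "P = P0"
      unfolding P_eq P0_eq by (intro ext) (auto simp: perm_matrix_of_def)
    with \<open>P \<noteq> P0\<close> show False ..
  qed
  then have "(\<Sum>p<m. T p (\<sigma> p)) < (\<Sum>p<m. T p (\<sigma>0 p))"
    by (intro sum_strict_mono_ex1) (auto intro: row_le row_less)
  then show "trace_PtT m P T < trace_PtT m P0 T"
    by (simp add: P_eq P0_eq trace_PtT_perm_matrix_of \<sigma> \<sigma>0)
qed

lemma unique_maximizer_noisy_matrix:
  assumes "P0 \<in> perm_matrices m"
    and "\<And>p q q'. p < m \<Longrightarrow> q' < m \<Longrightarrow> P0 p q = 1 \<Longrightarrow> P0 p q' = 0 \<Longrightarrow> (Z (p, q))\<^sup>2 + (Z (p, q'))\<^sup>2 < 1"
  shows "unique_maximizer m (noisy_matrix P0 Z) P0"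
proof (rule unique_maximizer_if_row_dominant)
  fix p q q' assume "p < m" "q' < m" "P0 p q = 1" "P0 p q' = 0"
  moreover from this have "(Z (p, q))\<^sup>2 + (Z (p, q'))\<^sup>2 < 1" by (rule assms(2))
  ultimately show "noisy_matrix P0 Z p q' < noisy_matrix P0 Z p q"
    by (simp add: noisy_matrix_def)
qed (rule assms(1))

lemma sets_Collect_unique_maximizer:
  assumes "\<And>p q. p < m \<Longrightarrow> q < m \<Longrightarrow> (\<lambda>x. T x p q) \<in> borel_measurable M"
  shows "{x \<in> space M. unique_maximizer m (T x) P0} \<in> sets M"
proof -
  have "(\<lambda>x. trace_PtT m P (T x)) \<in> borel_measurable M" for P
    unfolding trace_PtT_def using assms by (intro borel_measurable_sum borel_measurable_times) auto
  then have "Measurable.pred M (\<lambda>x. \<forall>P\<in>perm_matrices m. P \<noteq> P0 \<longrightarrow> trace_PtT m P (T x) < trace_PtT m P0 (T x))"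
    by (intro pred_intros_finite(3)[OF finite_perm_matrices]) auto
  then show ?thesis by (cases "P0 \<in> perm_matrices m") (simp_all add: unique_maximizer_def pred_def)
qed

lemma prob_space_gauss_array: "\<eta> > 0 \<Longrightarrow> prob_space (gauss_array m \<eta>)"
  unfolding gauss_array_def by (intro prob_space_PiM prob_space_normal_density) simp

lemma gauss_array_component_measurable:
  assumes "i \<in> {..<m} \<times> {..<m}"
  shows "(\<lambda>Z. Z i) \<in> borel_measurable (gauss_array m \<eta>)"
  using measurable_component_singleton[OF assms, of "\<lambda>_. density lborel (normal_density 0 (sqrt \<eta>))"]
  unfolding gauss_array_def by simp

lemma prob_gauss_array_pair_outside_disc:
  assumes \<eta>: "\<eta> > 0" and r: "r > 0"
    and ij: "i \<in> {..<m} \<times> {..<m}" "j \<in> {..<m} \<times> {..<m}" "i \<noteq> j"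
  shows "measure (gauss_array m \<eta>) {Z \<in> space (gauss_array m \<eta>). r \<le> (Z i)\<^sup>2 + (Z j)\<^sup>2}
       = exp (- r / (2 * \<eta>))"
proof -
  let ?N = "density lborel (normal_density 0 (sqrt \<eta>))"
  let ?A = "{z \<in> space (?N \<Otimes>\<^sub>M ?N). r \<le> (fst z)\<^sup>2 + (snd z)\<^sup>2}"
  interpret N: prob_space ?N using \<eta> by (intro prob_space_normal_density) simp
  have "?A \<in> sets (?N \<Otimes>\<^sub>M ?N)" by measurable
  from N.prob_PiM_component_pair[OF ij this]
  have "measure (gauss_array m \<eta>) {Z \<in> space (gauss_array m \<eta>). r \<le> (Z i)\<^sup>2 + (Z j)\<^sup>2}
      = measure (?N \<Otimes>\<^sub>M ?N) ?A"
    by (simp add: gauss_array_def space_pair_measure)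
  also have "\<dots> = exp (- r / (2 * \<eta>))"
    using emeasure_normal_pair_outside_disc[of "sqrt \<eta>" r] \<eta> r
    by (intro measure_eq_emeasure_eq_ennreal) simp_all
  finally show ?thesis .
qed

lemma square_mul_exp_le_powr:
  fixes m :: nat and \<epsilon> \<eta> :: real
  assumes "\<epsilon> > 0" "\<eta> > 0" "\<eta> \<le> 1 / (4 * (1 + \<epsilon>) * ln (real m) + 2)" "m \<ge> 1"
  shows "real m ^ 2 * exp (- 1 / (2 * \<eta>)) \<le> real m powr (- 2 * \<epsilon>)"
proof -
  define L where "L = ln (real m)"
  have "L \<ge> 0" using assms(4) by (simp add: L_def)
  then have "4 * (1 + \<epsilon>) * L + 2 > 0" using assms(1) by (intro add_nonneg_pos) simp_all
  then have "4 * (1 + \<epsilon>) * L + 2 \<le> 1 / \<eta>"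
    using assms(2,3) by (simp add: L_def field_simps)
  then have "- 1 / (2 * \<eta>) \<le> - 2 * (1 + \<epsilon>) * L - 1"
    by (simp add: field_simps)
  then have "exp (2 * L) * exp (- 1 / (2 * \<eta>)) \<le> exp (2 * L) * exp (- 2 * (1 + \<epsilon>) * L)"
    by simp
  also have "\<dots> = exp (- 2 * \<epsilon> * L)"
    by (simp flip: exp_add add: algebra_simps)
  finally have "exp (2 * L) * exp (- 1 / (2 * \<eta>)) \<le> exp (- 2 * \<epsilon> * L)" .
  moreover have "exp (2 * L) = real m ^ 2"
    using assms(4) by (simp add: L_def exp_double)
  ultimately show ?thesis
    using assms(4) by (simp add: L_def powr_def)
qed

lemma (in prob_space) prob_ge_one_minus_union_bound:
  assumes "finite D" "A \<in> events" "space M - (\<Union>i\<in>D. B i) \<subseteq> A"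
    and "\<And>i. i \<in> D \<Longrightarrow> B i \<in> events" "\<And>i. i \<in> D \<Longrightarrow> prob (B i) \<le> c"
  shows "prob A \<ge> 1 - real (card D) * c"
proof -
  have "1 - prob (\<Union>i\<in>D. B i) = prob (space M - (\<Union>i\<in>D. B i))"
    using assms(1,4) by (intro prob_compl[symmetric] sets.finite_UN) auto
  also have "\<dots> \<le> prob A"
    using assms(3,2) by (rule finite_measure_mono)
  finally have "1 - prob (\<Union>i\<in>D. B i) \<le> prob A" .
  moreover have "prob (\<Union>i\<in>D. B i) \<le> (\<Sum>i\<in>D. prob (B i))"
    using assms(1,4) by (intro finite_measure_subadditive_finite) auto
  moreover have "(\<Sum>i\<in>D. prob (B i)) \<le> real (card D) * c"
    using sum_mono[of D "\<lambda>i. prob (B i)" "\<lambda>_. c"] assms(5) by simp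
  ultimately show ?thesis by linarith
qed

lemma prob_unique_maximizer_noisy_matrix:
  assumes \<eta>: "\<eta> > 0" and P0: "P0 \<in> perm_matrices m"
  shows "measure (gauss_array m \<eta>) {Z \<in> space (gauss_array m \<eta>). unique_maximizer m (noisy_matrix P0 Z) P0}
       \<ge> 1 - real m ^ 2 * exp (- 1 / (2 * \<eta>))"
proof -
  let ?M = "gauss_array m \<eta>"
  interpret M: prob_space ?M using \<eta> by (rule prob_space_gauss_array)
  obtain \<sigma>0 where \<sigma>0: "\<sigma>0 \<in> {..<m} \<rightarrow> {..<m}" and P0_eq: "P0 = perm_matrix_of m \<sigma>0"
    using P0 by (rule perm_matrices_obtain_map)
  define D where "D = {(p, q). p < m \<and> q < m \<and> q \<noteq> \<sigma>0 p}"
  have D: "D \<subseteq> {..<m} \<times> {..<m}" "finite D"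
    by (auto simp: D_def intro: finite_subset[of _ "{..<m} \<times> {..<m}"])
  define bad where "bad pq = {Z \<in> space ?M. 1 \<le> (Z (fst pq, \<sigma>0 (fst pq)))\<^sup>2 + (Z pq)\<^sup>2}" for pq
  have bad: "bad pq \<in> sets ?M" "measure ?M (bad pq) = exp (- 1 / (2 * \<eta>))" if "pq \<in> D" for pq
  proof -
    have "(fst pq, \<sigma>0 (fst pq)) \<in> {..<m} \<times> {..<m}" "pq \<in> {..<m} \<times> {..<m}" "(fst pq, \<sigma>0 (fst pq)) \<noteq> pq"
      using that \<sigma>0 by (auto simp: D_def)
    note components = this gauss_array_component_measurable[OF this(1)] gauss_array_component_measurable[OF this(2)]
    show "bad pq \<in> sets ?M" unfolding bad_def using components by measurable
    show "measure ?M (bad pq) = exp (- 1 / (2 * \<eta>))"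
      unfolding bad_def using components by (intro prob_gauss_array_pair_outside_disc \<eta>) simp_all
  qed
  have good: "space ?M - (\<Union>pq\<in>D. bad pq) \<subseteq> {Z \<in> space ?M. unique_maximizer m (noisy_matrix P0 Z) P0}"
  proof safe
    fix Z assume Z: "Z \<in> space ?M" and not_bad: "Z \<notin> (\<Union>pq\<in>D. bad pq)"
    show "unique_maximizer m (noisy_matrix P0 Z) P0"
    proof (rule unique_maximizer_noisy_matrix[OF P0])
      fix p q q' assume "p < m" "q' < m" "P0 p q = 1" "P0 p q' = 0"
      then have "q = \<sigma>0 p" "(p, q') \<in> D"
        by (auto simp: P0_eq perm_matrix_of_def D_def split: if_splits)
      moreover from this(2) have "Z \<notin> bad (p, q')" using not_bad by blast
      ultimately show "(Z (p, q))\<^sup>2 + (Z (p, q'))\<^sup>2 < 1"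
        using Z by (simp add: bad_def not_le)
    qed
  qed
  have "{Z \<in> space ?M. unique_maximizer m (noisy_matrix P0 Z) P0} \<in> sets ?M"
    unfolding noisy_matrix_def using gauss_array_component_measurable
    by (intro sets_Collect_unique_maximizer) simp
  from M.prob_ge_one_minus_union_bound[OF D(2) this good] bad
  have "measure ?M {Z \<in> space ?M. unique_maximizer m (noisy_matrix P0 Z) P0}
      \<ge> 1 - real (card D) * exp (- 1 / (2 * \<eta>))"
    by simp
  moreover have "real (card D) * exp (- 1 / (2 * \<eta>)) \<le> real m ^ 2 * exp (- 1 / (2 * \<eta>))"
    using card_mono[OF _ D(1)] by (intro mult_right_mono) (simp_all add: power2_eq_square flip: of_nat_mult)
  ultimately show ?thesis by linarith
qed

theorem mainTheorem4:
  fixes m :: nat and \<eta> \<epsilon> :: real and That :: "nat \<Rightarrow> nat \<Rightarrow> real"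
  assumes "\<epsilon> > 0"
    and "That \<in> perm_matrices m"
    and "\<eta> > 0"
    and "\<eta> \<le> min (1/10) (1 / (4 * (1 + \<epsilon>) * ln (real m) + 2))"
    and "real m \<ge> 2 powr (1 / \<epsilon>)"
  shows "measure (gauss_array m \<eta>)
           {Z \<in> space (gauss_array m \<eta>). unique_maximizer m (noisy_matrix That Z) That}
         \<ge> 1 - real m powr (- 2 * \<epsilon>)"
proof -
  txt \<open>The bounds \<open>\<eta> \<le> 1/10\<close> and \<open>m \<ge> 2 powr (1/\<epsilon>)\<close> are only needed in the form \<open>m > 0\<close>.\<close>
  have "real m > 0"
    using assms(5) by (smt (verit) powr_gt_zero)
  then have "real m ^ 2 * exp (- 1 / (2 * \<eta>)) \<le> real m powr (- 2 * \<epsilon>)"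
    using assms(1,3,4) by (intro square_mul_exp_le_powr) simp_all
  with prob_unique_maximizer_noisy_matrix[OF assms(3,2)] show ?thesis
    by linarith
qed

end
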